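(* If the $r\times r$ minors of an $n\times n$ symmetric matrix of indeterminates do not form a tropical basis, then the $(r+1)\times(r+1)$ minors of an $(n+1)\times(n+1)$ symmetric matrix of indeterminates do not form a tropical basis.
   Context: Let $\tilde K$ be the field of Hahn series $\sum_{\alpha\in A}c_\alpha t^\alpha$ ($A\subset\mathbb R$ well-ordered, $c_\alpha\in\mathbb C$); for nonzero $a\in\tilde K$, $\deg(a)$ is the smallest exponent with nonzero coefficient. A symmetric lift of a real symmetric matrix $A$ is a symmetric matrix $\tilde A$ over $\tilde K$ with all entries nonzero and $\deg(\tilde a_{i,j})=A_{i,j}$. For an $r\times r$ submatrix of $A$ with row index set $I$ and column index set $J$, each bijection $\rho:I\to J$ gives a monomial $\prod_{i\in I}X_{i,\rho(i)}$ in commuting variables subject to $X_{i,j}=X_{j,i}$, with value $\sum_{i\in I}A_{i,\rho(i)}$; the submatrix is symmetrically tropically singular if the minimum value is attained by at least two distinct monomials. The $r\times r$ minors of an $n\times n$ symmetric matrix of indeterminates form a tropical basis if for every real symmetric $n\times n$ matrix $A$: every $r\times r$ submatrix of $A$ is symmetrically tropically singular if and only if $A$ has a symmetric lift of rank at most $r-1$ (equivalently, the tropical prevariety of the tropicalized minors equals the tropicalization of the variety they define). *)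

theory Defs
  imports Complex_Main "HOL-Combinatorics.Permutations" "HOL-Library.Multiset"
begin

text \<open>A Hahn series sum c_alpha t^alpha is represented by its coefficient function
  real => complex; it is a Hahn series iff its support is well-ordered.\<close>

type_synonym hahn = "real \<Rightarrow> complex"

definition is_hahn :: "hahn \<Rightarrow> bool" where
  "is_hahn a \<longleftrightarrow> wf {(x, y). x < y \<and> a x \<noteq> 0 \<and> a y \<noteq> 0}"

definition hzero :: hahn where "hzero = (\<lambda>_. 0)"

definition hone :: hahn where "hone = (\<lambda>g. if g = 0 then 1 else 0)"

text \<open>Product of Hahn series (the sum is finite for well-ordered supports).\<close>
definition hmul :: "hahn \<Rightarrow> hahn \<Rightarrow> hahn" where
  "hmul a b = (\<lambda>g. \<Sum>x\<in>{x. a x \<noteq> 0 \<and> b (g - x) \<noteq> 0}. a x * b (g - x))"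

definition hdeg :: "hahn \<Rightarrow> real" where
  "hdeg a = (LEAST x. a x \<noteq> 0)"

definition hdet :: "nat \<Rightarrow> (nat \<Rightarrow> nat \<Rightarrow> hahn) \<Rightarrow> hahn" where
  "hdet r M = (\<lambda>g. \<Sum>p\<in>{p. p permutes {..<r}}.
      of_int (sign p) * foldr hmul (map (\<lambda>k. M k (p k)) [0..<r]) hone g)"

definition hminor :: "(nat \<Rightarrow> nat \<Rightarrow> hahn) \<Rightarrow> nat set \<Rightarrow> nat set \<Rightarrow> hahn" where
  "hminor M I J = hdet (card I)
     (\<lambda>k l. M (sorted_list_of_set I ! k) (sorted_list_of_set J ! l))"

definition symmetric_mat :: "nat \<Rightarrow> (nat \<Rightarrow> nat \<Rightarrow> 'a) \<Rightarrow> bool" where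
  "symmetric_mat n A \<longleftrightarrow> (\<forall>i<n. \<forall>j<n. A i j = A j i)"

definition symmetric_lift :: "nat \<Rightarrow> (nat \<Rightarrow> nat \<Rightarrow> real) \<Rightarrow> (nat \<Rightarrow> nat \<Rightarrow> hahn) \<Rightarrow> bool" where
  "symmetric_lift n A L \<longleftrightarrow> symmetric_mat n L \<and>
     (\<forall>i<n. \<forall>j<n. is_hahn (L i j) \<and> L i j \<noteq> hzero \<and> hdeg (L i j) = A i j)"

text \<open>Rank at most r-1, expressed as vanishing of all r x r minors (i.e. L lies on the
  variety defined by the r x r minors).\<close>
definition rank_le_pred :: "nat \<Rightarrow> nat \<Rightarrow> (nat \<Rightarrow> nat \<Rightarrow> hahn) \<Rightarrow> bool" where
  "rank_le_pred n r L \<longleftrightarrow> (\<forall>I J. I \<subseteq> {..<n} \<longrightarrow> J \<subseteq> {..<n} \<longrightarrow> card I = r \<longrightarrow> card J = r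
      \<longrightarrow> hminor L I J = hzero)"

text \<open>Monomial prod_{i in I} X_{i,rho i} with X_{i,j} = X_{j,i}: a multiset of unordered
  index pairs.\<close>
definition sym_monomial :: "nat set \<Rightarrow> (nat \<Rightarrow> nat) \<Rightarrow> nat set multiset" where
  "sym_monomial I \<rho> = image_mset (\<lambda>i. {i, \<rho> i}) (mset_set I)"

definition trop_value :: "(nat \<Rightarrow> nat \<Rightarrow> real) \<Rightarrow> nat set \<Rightarrow> (nat \<Rightarrow> nat) \<Rightarrow> real" where
  "trop_value A I \<rho> = (\<Sum>i\<in>I. A i (\<rho> i))"

definition sym_trop_singular :: "(nat \<Rightarrow> nat \<Rightarrow> real) \<Rightarrow> nat set \<Rightarrow> nat set \<Rightarrow> bool" where
  "sym_trop_singular A I J \<longleftrightarrow>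
     (\<exists>\<rho>1 \<rho>2. bij_betw \<rho>1 I J \<and> bij_betw \<rho>2 I J \<and>
        sym_monomial I \<rho>1 \<noteq> sym_monomial I \<rho>2 \<and>
        trop_value A I \<rho>2 = trop_value A I \<rho>1 \<and>
        (\<forall>\<rho>. bij_betw \<rho> I J \<longrightarrow> trop_value A I \<rho>1 \<le> trop_value A I \<rho>))"

definition sym_minors_tropical_basis :: "nat \<Rightarrow> nat \<Rightarrow> bool" where
  "sym_minors_tropical_basis n r \<longleftrightarrow>
     (\<forall>A :: nat \<Rightarrow> nat \<Rightarrow> real. symmetric_mat n A \<longrightarrow>
        ((\<forall>I J. I \<subseteq> {..<n} \<longrightarrow> J \<subseteq> {..<n} \<longrightarrow> card I = r \<longrightarrow> card J = r
            \<longrightarrow> sym_trop_singular A I J)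
         \<longleftrightarrow> (\<exists>L. symmetric_lift n A L \<and> rank_le_pred n r L)))"

end

theory Submission
  imports Defs "HOL-Library.Infinite_Set" "Jordan_Normal_Form.Determinant"
begin

text \<open>
  One direction of the tropical basis property always holds: if a symmetric lift L of A has all
  r \<times> r minors zero, every r \<times> r submatrix of A is symmetrically tropically singular. Indeed, if
  the minimum of a tropical minor is attained by a single symmetric monomial, all permutations
  attaining it differ by squares of permutations, hence have the same sign, and they contribute
  the same leading coefficient; so the lowest term of the minor of L cannot cancel.

  Hence a failure for (n, r) is a symmetric A whose r \<times> r submatrices are all singular but which
  has no symmetric lift of rank below r. Border A by a last row and column of a constant N larger
  than all entries, with corner 0. In a minimal matching of an (r + 1) \<times> (r + 1) submatrix the
  new index is matched to itself or to an old one, and removing that pair leaves a singular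
  r \<times> r submatrix of A, which lifts back. Conversely, from a lift L of rank at most r of the
  bordered matrix, the Schur complement L n n * L i j - L i n * L n j is a lift of A (the
  correction has degree 2 N), and by Chio condensation its r \<times> r minors vanish.
\<close>

section \<open>Well-ordered sets of reals\<close>

definition wo_set :: "real set \<Rightarrow> bool" where
  "wo_set S \<longleftrightarrow> \<not> (\<exists>f. \<forall>i. f i \<in> S \<and> f (Suc i) < f i)"

lemma is_hahn_iff_wo_set: "is_hahn a \<longleftrightarrow> wo_set {x. a x \<noteq> 0}"
  unfolding is_hahn_def wo_set_def wf_iff_no_infinite_down_chain by auto

lemma wo_setD: "wo_set S \<Longrightarrow> (\<And>i. f i \<in> S) \<Longrightarrow> (\<And>i. f (Suc i) < f i) \<Longrightarrow> False"
  unfolding wo_set_def by blast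

lemma wo_set_subset: "wo_set B \<Longrightarrow> A \<subseteq> B \<Longrightarrow> wo_set A"
  unfolding wo_set_def by blast

lemma decreasing_subseq:
  fixes f :: "nat \<Rightarrow> real"
  assumes "\<And>i. f (Suc i) < f i" "strict_mono h"
  shows "f (h (Suc i)) < f (h i)"
proof -
  have "h i < h (Suc i)" using assms(2) by (simp add: strict_mono_def)
  then have "- f (h i) < - f (h (Suc i))" using lift_Suc_mono_less[of "\<lambda>i. - f i"] assms(1) by simp
  then show ?thesis by simp
qed

lemma wo_set_incseq_subseq:
  fixes s :: "nat \<Rightarrow> real"
  assumes "wo_set S" "\<And>n. s n \<in> S"
  obtains h where "strict_mono h" "incseq (\<lambda>n. s (h n))"
proof -
  obtain f where f: "strict_mono f" "monoseq (\<lambda>n. s (f n))" using seq_monosub by blast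
  show ?thesis
  proof (cases "incseq (\<lambda>n. s (f n))")
    case True
    then show ?thesis using f that by blast
  next
    case False
    then have dec: "s (f n) \<le> s (f m)" if "m \<le> n" for m n
      using f(2) antimonoD[OF _ that, of "\<lambda>n. s (f n)"] by (simp add: monoseq_iff)
    have "\<exists>k. \<forall>m\<ge>k. s (f m) = s (f k)"
    proof (rule ccontr)
      assume not_const: "\<not> ?thesis"
      have "\<exists>m. s (f m) < s (f k)" for k
      proof -
        obtain m where "m \<ge> k" "s (f m) \<noteq> s (f k)" using not_const by blast
        then show ?thesis using dec[of k m] by (intro exI[of _ m]) simp
      qed
      then obtain F where F: "\<And>k. s (f (F k)) < s (f k)" by metis
      show False
        using wo_setD[OF assms(1), of "\<lambda>n. s (f ((F ^^ n) 0))"] assms(2) F by simp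
    qed
    then obtain k where k: "\<And>m. m \<ge> k \<Longrightarrow> s (f m) = s (f k)" by blast
    have "strict_mono (\<lambda>n. f (n + k))" using f(1) unfolding strict_mono_def by simp
    moreover have "incseq (\<lambda>n. s (f (n + k)))"
      by (rule incseq_SucI) (simp add: k[of "n + k" for n] k[of "Suc (n + k)" for n])
    ultimately show ?thesis using that by blast
  qed
qed

lemma wo_set_finite_visits:
  assumes "wo_set S" "\<And>i. f (Suc i) < f i"
  shows "finite {i. f i \<in> S}"
proof (rule ccontr)
  assume inf: "infinite {i. f i \<in> S}"
  let ?h = "enumerate {i. f i \<in> S}"
  have "strict_mono ?h" using enumerate_mono[OF _ inf] by (simp add: strict_mono_def)
  then have "\<And>i. f (?h (Suc i)) < f (?h i)" using decreasing_subseq assms(2) by blast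
  moreover have "\<And>i. f (?h i) \<in> S" using enumerate_in_set[OF inf] by blast
  ultimately show False using wo_setD[OF assms(1), of "\<lambda>i. f (?h i)"] by blast
qed

lemma wo_set_Un:
  assumes "wo_set A" "wo_set B"
  shows "wo_set (A \<union> B)"
  unfolding wo_set_def
proof
  assume "\<exists>f. \<forall>i. f i \<in> A \<union> B \<and> f (Suc i) < f i"
  then obtain f where f: "\<And>i. f i \<in> A \<union> B" "\<And>i. f (Suc i) < f i" by blast
  have "{i. f i \<in> A} \<union> {i. f i \<in> B} = UNIV" using f(1) by auto
  then show False
    using wo_set_finite_visits[of A f] wo_set_finite_visits[of B f] assms f(2)
    by (metis finite_Un infinite_UNIV_nat)
qed

lemma wo_set_plus:
  assumes "wo_set A" "wo_set B"
  shows "wo_set {x + y |x y. x \<in> A \<and> y \<in> B}"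
  unfolding wo_set_def
proof
  assume "\<exists>f. \<forall>i. f i \<in> {x + y |x y. x \<in> A \<and> y \<in> B} \<and> f (Suc i) < f i"
  then obtain f where f: "\<And>i. \<exists>x y. f i = x + y \<and> x \<in> A \<and> y \<in> B" "\<And>i. f (Suc i) < f i"
    by blast
  have "\<exists>x. x \<in> A \<and> f i - x \<in> B" for i
    using f(1)[of i] by (metis add_diff_cancel_left')
  then obtain a where a: "\<And>i. a i \<in> A" "\<And>i. f i - a i \<in> B" by metis
  obtain h where h: "strict_mono h" "incseq (\<lambda>n. a (h n))" using wo_set_incseq_subseq[OF assms(1) a(1)] .
  have "f (h (Suc i)) - a (h (Suc i)) < f (h i) - a (h i)" for i
    using decreasing_subseq[of f h i] f(2) h(1) incseq_SucD[OF h(2), of i] by simp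
  then show False using wo_setD[OF assms(2), of "\<lambda>i. f (h i) - a (h i)"] a(2) by blast
qed

text \<open>An infinite family of decompositions g = x + y would contain strictly increasing x-values,
  hence strictly decreasing y-values.\<close>
lemma wo_set_finite_decompositions:
  assumes "wo_set A" "wo_set B"
  shows "finite {x \<in> A. g - x \<in> B}"
proof (rule ccontr)
  assume "infinite {x \<in> A. g - x \<in> B}"
  then obtain f :: "nat \<Rightarrow> real" where f: "inj f" "range f \<subseteq> {x \<in> A. g - x \<in> B}"
    using infinite_countable_subset by blast
  then have fA: "\<And>n. f n \<in> A" and fB: "\<And>n. g - f n \<in> B" by auto
  obtain h where h: "strict_mono h" "incseq (\<lambda>n. f (h n))" using wo_set_incseq_subseq[OF assms(1) fA] .
  have "g - f (h (Suc i)) < g - f (h i)" for i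
  proof -
    have "h i \<noteq> h (Suc i)" using strict_monoD[OF h(1), of i "Suc i"] by simp
    then have "f (h i) \<noteq> f (h (Suc i))" using f(1) by (simp add: inj_eq)
    then show ?thesis using incseq_SucD[OF h(2), of i] by simp
  qed
  then show False using wo_setD[OF assms(2), of "\<lambda>i. g - f (h i)"] fB by blast
qed

section \<open>Multiplication of Hahn series\<close>

lemma hmul_support_finite: "is_hahn a \<Longrightarrow> is_hahn b \<Longrightarrow> finite {x. a x \<noteq> 0 \<and> b (g - x) \<noteq> 0}"
  using wo_set_finite_decompositions[of "{x. a x \<noteq> 0}" "{x. b x \<noteq> 0}" g] by (simp add: is_hahn_iff_wo_set)

lemma hmul_eq_sum_superset:
  "finite F \<Longrightarrow> {x. a x \<noteq> 0 \<and> b (g - x) \<noteq> 0} \<subseteq> F \<Longrightarrow> hmul a b g = (\<Sum>x\<in>F. a x * b (g - x))"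
  unfolding hmul_def by (rule sum.mono_neutral_left) auto

definition support_plus :: "hahn \<Rightarrow> hahn \<Rightarrow> real set" where
  "support_plus a b = {x + y |x y. x \<in> {x. a x \<noteq> 0} \<and> y \<in> {x. b x \<noteq> 0}}"

lemma wo_set_support_plus: "is_hahn a \<Longrightarrow> is_hahn b \<Longrightarrow> wo_set (support_plus a b)"
  unfolding support_plus_def is_hahn_iff_wo_set by (rule wo_set_plus)

lemma hmul_support_subset: "{g. hmul a b g \<noteq> 0} \<subseteq> support_plus a b"
proof
  fix g assume "g \<in> {g. hmul a b g \<noteq> 0}"
  then have "{x. a x \<noteq> 0 \<and> b (g - x) \<noteq> 0} \<noteq> {}" unfolding hmul_def by force
  then obtain x where "a x \<noteq> 0" "b (g - x) \<noteq> 0" by blast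
  then show "g \<in> support_plus a b"
    unfolding support_plus_def by (intro CollectI exI[of _ x] exI[of _ "g - x"]) simp
qed

lemma is_hahn_hmul: "is_hahn a \<Longrightarrow> is_hahn b \<Longrightarrow> is_hahn (hmul a b)"
  using wo_set_support_plus hmul_support_subset wo_set_subset is_hahn_iff_wo_set by metis

lemma is_hahn_add:
  assumes "is_hahn a" "is_hahn b"
  shows "is_hahn (\<lambda>g. a g + b g)"
proof -
  have "wo_set ({x. a x \<noteq> 0} \<union> {x. b x \<noteq> 0})" using assms by (simp add: is_hahn_iff_wo_set wo_set_Un)
  moreover have "{x. a x + b x \<noteq> 0} \<subseteq> {x. a x \<noteq> 0} \<union> {x. b x \<noteq> 0}" by auto
  ultimately show ?thesis by (simp add: is_hahn_iff_wo_set wo_set_subset)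
qed

lemma is_hahn_uminus: "is_hahn a \<Longrightarrow> is_hahn (\<lambda>g. - a g)"
  unfolding is_hahn_iff_wo_set by simp

lemma is_hahn_diff: "is_hahn a \<Longrightarrow> is_hahn b \<Longrightarrow> is_hahn (\<lambda>g. a g - b g)"
  using is_hahn_add[of a "\<lambda>g. - b g"] is_hahn_uminus[of b] by simp

lemma is_hahn_hzero: "is_hahn hzero"
  unfolding is_hahn_def hzero_def by simp

lemma is_hahn_hone: "is_hahn hone"
proof -
  have "{(x, y). x < y \<and> hone x \<noteq> 0 \<and> hone y \<noteq> 0} = {}" unfolding hone_def by auto
  then show ?thesis unfolding is_hahn_def by (simp only: wf_def) blast
qed

lemma hmul_commute: "hmul a b = hmul b a"
proof
  fix g
  show "hmul a b g = hmul b a g"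
    unfolding hmul_def
    by (rule sum.reindex_bij_witness[of _ "\<lambda>x. g - x" "\<lambda>x. g - x"]) (auto simp: mult.commute)
qed

lemma hmul_const_left: "hmul (\<lambda>g. if g = 0 then c else 0) a = (\<lambda>g. c * a g)"
proof
  fix g
  have "hmul (\<lambda>g. if g = 0 then c else 0) a g = (\<Sum>x\<in>{0}. (\<lambda>g. if g = 0 then c else 0) x * a (g - x))"
    by (rule hmul_eq_sum_superset) auto
  then show "hmul (\<lambda>g. if g = 0 then c else 0) a g = c * a g" by simp
qed

lemma hmul_hone_left: "hmul hone a = a"
  using hmul_const_left[of 1 a] by (simp add: hone_def)

lemma hmul_distrib_right:
  assumes "is_hahn a" "is_hahn b" "is_hahn c"
  shows "hmul (\<lambda>g. a g + b g) c = (\<lambda>g. hmul a c g + hmul b c g)"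
proof
  fix g
  let ?F = "{x. a x \<noteq> 0 \<and> c (g - x) \<noteq> 0} \<union> {x. b x \<noteq> 0 \<and> c (g - x) \<noteq> 0}"
  have fin: "finite ?F" using hmul_support_finite assms by blast
  have "hmul (\<lambda>g. a g + b g) c g = (\<Sum>x\<in>?F. (a x + b x) * c (g - x))"
    by (rule hmul_eq_sum_superset[OF fin]) auto
  also have "\<dots> = (\<Sum>x\<in>?F. a x * c (g - x)) + (\<Sum>x\<in>?F. b x * c (g - x))"
    by (simp add: distrib_right sum.distrib)
  also have "(\<Sum>x\<in>?F. a x * c (g - x)) = hmul a c g"
    by (rule hmul_eq_sum_superset[OF fin, symmetric]) auto
  also have "(\<Sum>x\<in>?F. b x * c (g - x)) = hmul b c g"
    by (rule hmul_eq_sum_superset[OF fin, symmetric]) auto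
  finally show "hmul (\<lambda>g. a g + b g) c g = hmul a c g + hmul b c g" .
qed

text \<open>Both sides are the finite double sum of a x * b z * c (g - x - z); the finiteness of the
  intermediate index sets comes from the well-ordering of the supports.\<close>
lemma hmul_assoc:
  assumes a: "is_hahn a" and b: "is_hahn b" and c: "is_hahn c"
  shows "hmul (hmul a b) c = hmul a (hmul b c)"
proof
  fix g
  define F1 where "F1 = {y \<in> support_plus a b. g - y \<in> {x. c x \<noteq> 0}}"
  define F2 where "F2 = (\<lambda>y. {x. a x \<noteq> 0 \<and> b (y - x) \<noteq> 0})"
  define G1 where "G1 = {x \<in> {x. a x \<noteq> 0}. g - x \<in> support_plus b c}"
  define G2 where "G2 = (\<lambda>x. {z. b z \<noteq> 0 \<and> c (g - x - z) \<noteq> 0})"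
  have fF1: "finite F1"
    unfolding F1_def using wo_set_finite_decompositions[OF wo_set_support_plus[OF a b], of "{x. c x \<noteq> 0}"] c
    by (simp add: is_hahn_iff_wo_set)
  have fG1: "finite G1"
    unfolding G1_def using wo_set_finite_decompositions[OF _ wo_set_support_plus[OF b c], of "{x. a x \<noteq> 0}"] a
    by (simp add: is_hahn_iff_wo_set)
  have fF2: "finite (F2 y)" for y unfolding F2_def using hmul_support_finite[OF a b] .
  have fG2: "finite (G2 x)" for x unfolding G2_def using hmul_support_finite[OF b c, of "g - x"] .
  have "hmul (hmul a b) c g = (\<Sum>y\<in>F1. hmul a b y * c (g - y))"
    by (rule hmul_eq_sum_superset[OF fF1]) (use hmul_support_subset in \<open>auto simp: F1_def\<close>)
  also have "\<dots> = (\<Sum>y\<in>F1. \<Sum>x\<in>F2 y. a x * b (y - x) * c (g - y))"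
    unfolding hmul_def F2_def by (simp add: sum_distrib_right)
  also have "\<dots> = (\<Sum>(y, x)\<in>Sigma F1 F2. a x * b (y - x) * c (g - y))"
    by (rule sum.Sigma[OF fF1]) (use fF2 in auto)
  also have "\<dots> = (\<Sum>(x, z)\<in>Sigma G1 G2. a x * (b z * c (g - x - z)))"
  proof (rule sum.reindex_bij_witness[of _ "\<lambda>(x, z). (x + z, x)" "\<lambda>(y, x). (x, y - x)"])
    fix p assume "p \<in> Sigma F1 F2"
    then obtain y x where p: "p = (y, x)" "y \<in> F1" "x \<in> F2 y" by blast
    then show "(\<lambda>(x, z). (x + z, x)) ((\<lambda>(y, x). (x, y - x)) p) = p" by simp
    have "g - x \<in> support_plus b c" unfolding support_plus_def using p
      by (intro CollectI exI[of _ "y - x"] exI[of _ "g - y"]) (auto simp: F1_def F2_def)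
    then show "(\<lambda>(y, x). (x, y - x)) p \<in> Sigma G1 G2"
      using p by (auto simp: G1_def G2_def F1_def F2_def)
    show "(case (\<lambda>(y, x). (x, y - x)) p of (x, z) \<Rightarrow> a x * (b z * c (g - x - z))) =
       (case p of (y, x) \<Rightarrow> a x * b (y - x) * c (g - y))" using p by simp
  next
    fix q assume "q \<in> Sigma G1 G2"
    then obtain x z where q: "q = (x, z)" "x \<in> G1" "z \<in> G2 x" by blast
    then show "(\<lambda>(y, x). (x, y - x)) ((\<lambda>(x, z). (x + z, x)) q) = q" by simp
    have "x + z \<in> support_plus a b" unfolding support_plus_def using q
      by (intro CollectI exI[of _ x] exI[of _ z]) (auto simp: G1_def G2_def)
    then show "(\<lambda>(x, z). (x + z, x)) q \<in> Sigma F1 F2"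
      using q by (auto simp: G1_def G2_def F1_def F2_def diff_diff_eq)
  qed
  also have "\<dots> = (\<Sum>x\<in>G1. \<Sum>z\<in>G2 x. a x * (b z * c (g - x - z)))"
    by (rule sum.Sigma[OF fG1, symmetric]) (use fG2 in auto)
  also have "\<dots> = (\<Sum>x\<in>G1. a x * hmul b c (g - x))"
    unfolding hmul_def G2_def by (simp add: sum_distrib_left)
  also have "\<dots> = hmul a (hmul b c) g"
    by (rule hmul_eq_sum_superset[OF fG1, symmetric]) (use hmul_support_subset in \<open>auto simp: G1_def\<close>)
  finally show "hmul (hmul a b) c g = hmul a (hmul b c) g" .
qed

lemma hdeg_eqI: "a z \<noteq> 0 \<Longrightarrow> (\<And>x. x < z \<Longrightarrow> a x = 0) \<Longrightarrow> hdeg a = z"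
  unfolding hdeg_def by (rule Least_equality) (auto simp: not_less[symmetric])

lemma hdeg_coeff_nonzero:
  assumes "is_hahn a" "a \<noteq> hzero"
  shows "a (hdeg a) \<noteq> 0"
    and "\<And>x. x < hdeg a \<Longrightarrow> a x = 0"
proof -
  obtain x0 where x0: "a x0 \<noteq> 0" using assms(2) unfolding hzero_def by auto
  obtain z where z: "z \<in> {x. a x \<noteq> 0}"
    and zmin: "\<And>y. (y, z) \<in> {(x, y). x < y \<and> a x \<noteq> 0 \<and> a y \<noteq> 0} \<Longrightarrow> y \<notin> {x. a x \<noteq> 0}"
    using wfE_min[OF assms(1)[unfolded is_hahn_def], of x0 "{x. a x \<noteq> 0}"] x0 by blast
  have low: "\<And>x. x < z \<Longrightarrow> a x = 0" using z zmin by blast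
  have "hdeg a = z" using z low by (intro hdeg_eqI) auto
  then show "a (hdeg a) \<noteq> 0" "\<And>x. x < hdeg a \<Longrightarrow> a x = 0" using z low by auto
qed

lemma coeff_below_hdeg: "is_hahn a \<Longrightarrow> x < hdeg a \<Longrightarrow> a x = 0"
  using hdeg_coeff_nonzero(2)[of a x] by (cases "a = hzero") (auto simp: hzero_def)

lemma hdeg_le: "is_hahn a \<Longrightarrow> a x \<noteq> 0 \<Longrightarrow> hdeg a \<le> x"
  using coeff_below_hdeg[of a x] by fastforce

lemma hmul_coeff_hdeg_sum:
  assumes a: "is_hahn a" and b: "is_hahn b"
  shows "hmul a b (hdeg a + hdeg b) = a (hdeg a) * b (hdeg b)"
    and "\<And>g. g < hdeg a + hdeg b \<Longrightarrow> hmul a b g = 0"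
proof -
  have "hmul a b (hdeg a + hdeg b) = (\<Sum>x\<in>{hdeg a}. a x * b (hdeg a + hdeg b - x))"
  proof (rule hmul_eq_sum_superset)
    show "{x. a x \<noteq> 0 \<and> b (hdeg a + hdeg b - x) \<noteq> 0} \<subseteq> {hdeg a}"
    proof
      fix x assume "x \<in> {x. a x \<noteq> 0 \<and> b (hdeg a + hdeg b - x) \<noteq> 0}"
      then have "hdeg a \<le> x" "hdeg b \<le> hdeg a + hdeg b - x" using hdeg_le a b by blast+
      then show "x \<in> {hdeg a}" by simp
    qed
  qed simp
  then show "hmul a b (hdeg a + hdeg b) = a (hdeg a) * b (hdeg b)" by simp
  fix g assume g: "g < hdeg a + hdeg b"
  have "hmul a b g = (\<Sum>x\<in>{}. a x * b (g - x))"
  proof (rule hmul_eq_sum_superset)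
    show "{x. a x \<noteq> 0 \<and> b (g - x) \<noteq> 0} \<subseteq> {}"
    proof
      fix x assume "x \<in> {x. a x \<noteq> 0 \<and> b (g - x) \<noteq> 0}"
      then have "hdeg a \<le> x" "hdeg b \<le> g - x" using hdeg_le a b by blast+
      then show "x \<in> {}" using g by simp
    qed
  qed simp
  then show "hmul a b g = 0" by simp
qed

lemma hmul_nonzero:
  assumes a: "is_hahn a" and b: "is_hahn b" and an: "a \<noteq> hzero" and bn: "b \<noteq> hzero"
  shows "hmul a b \<noteq> hzero" "hdeg (hmul a b) = hdeg a + hdeg b"
proof -
  have nz: "hmul a b (hdeg a + hdeg b) \<noteq> 0"
    using hmul_coeff_hdeg_sum(1)[OF a b] hdeg_coeff_nonzero(1)[OF a an] hdeg_coeff_nonzero(1)[OF b bn]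
    by simp
  then show "hmul a b \<noteq> hzero" by (auto simp: hzero_def)
  show "hdeg (hmul a b) = hdeg a + hdeg b"
    by (rule hdeg_eqI) (use nz hmul_coeff_hdeg_sum(2)[OF a b] in auto)
qed

lemma hdeg_diff_lower:
  assumes u: "is_hahn u" and v: "is_hahn v" and un: "u \<noteq> hzero" and lt: "hdeg u < hdeg v"
  shows "(\<lambda>g. u g - v g) \<noteq> hzero" "hdeg (\<lambda>g. u g - v g) = hdeg u"
proof -
  have nz: "u (hdeg u) - v (hdeg u) \<noteq> 0"
    using hdeg_coeff_nonzero(1)[OF u un] coeff_below_hdeg[OF v lt] by simp
  then show "(\<lambda>g. u g - v g) \<noteq> hzero" by (auto simp: hzero_def dest: fun_cong[of _ _ "hdeg u"])
  show "hdeg (\<lambda>g. u g - v g) = hdeg u"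
    using nz coeff_below_hdeg[OF u] coeff_below_hdeg[OF v] lt by (intro hdeg_eqI) auto
qed

section \<open>The ring of Hahn series\<close>

typedef hs = "{a. is_hahn a}" morphisms hrep habs
  using is_hahn_hzero by blast

setup_lifting type_definition_hs

instantiation hs :: comm_ring_1
begin

lift_definition zero_hs :: hs is hzero by (rule is_hahn_hzero)
lift_definition one_hs :: hs is hone by (rule is_hahn_hone)
lift_definition plus_hs :: "hs \<Rightarrow> hs \<Rightarrow> hs" is "\<lambda>a b g. a g + b g" by (rule is_hahn_add)
lift_definition uminus_hs :: "hs \<Rightarrow> hs" is "\<lambda>a g. - a g" by (rule is_hahn_uminus)
lift_definition minus_hs :: "hs \<Rightarrow> hs \<Rightarrow> hs" is "\<lambda>a b g. a g - b g" by (rule is_hahn_diff)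
lift_definition times_hs :: "hs \<Rightarrow> hs \<Rightarrow> hs" is hmul by (rule is_hahn_hmul)

instance
proof
  fix a b c :: hs
  show "a + b + c = a + (b + c)" by transfer (simp add: add.assoc)
  show "a + b = b + a" by transfer (simp add: add.commute)
  show "0 + a = a" by transfer (simp add: hzero_def)
  show "- a + a = 0" by transfer (simp add: hzero_def)
  show "a - b = a + - b" by transfer simp
  show "a * b * c = a * (b * c)" by transfer (rule hmul_assoc)
  show "a * b = b * a" by transfer (rule hmul_commute)
  show "1 * a = a" by transfer (rule hmul_hone_left)
  show "(a + b) * c = a * c + b * c" by transfer (rule hmul_distrib_right)
  show "(0::hs) \<noteq> 1" by transfer (auto simp: hzero_def hone_def dest: fun_cong[of _ _ 0])
qed

end

instance hs :: idom
  by standard (transfer, rule hmul_nonzero(1))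

lemma is_hahn_hrep: "is_hahn (hrep a)"
  using hrep by simp

lemma hrep_habs: "is_hahn a \<Longrightarrow> hrep (habs a) = a"
  using habs_inverse by simp

lemma hrep_eq_hzero_iff: "hrep a = hzero \<longleftrightarrow> a = 0"
  by (metis hrep_inject zero_hs.rep_eq)

lemma habs_nonzero: "is_hahn a \<Longrightarrow> a \<noteq> hzero \<Longrightarrow> habs a \<noteq> 0"
  by (metis hrep_habs zero_hs.rep_eq)

lemma hrep_sum: "hrep (sum f F) = (\<lambda>g. \<Sum>x\<in>F. hrep (f x) g)"
  by (induction F rule: infinite_finite_induct) (simp_all add: zero_hs.rep_eq hzero_def plus_hs.rep_eq)

lemma hrep_of_nat: "hrep (of_nat n) = (\<lambda>g. if g = 0 then of_nat n else 0)"
  by (induction n) (auto simp: zero_hs.rep_eq hzero_def plus_hs.rep_eq one_hs.rep_eq hone_def)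

lemma hrep_of_int: "hrep (of_int k) = (\<lambda>g. if g = 0 then of_int k else 0)"
proof (cases k rule: int_cases)
  case (nonneg n)
  then show ?thesis using hrep_of_nat[of n] by auto
next
  case (neg n)
  then have "(of_int k :: hs) = - of_nat (Suc n)" by (simp only: of_int_minus of_int_of_nat_eq)
  then have "hrep (of_int k) = (\<lambda>g. - hrep (of_nat (Suc n)) g)" by (simp only: uminus_hs.rep_eq)
  then show ?thesis unfolding hrep_of_nat using neg by auto
qed

lemma hrep_of_int_mult: "hrep (of_int k * a) = (\<lambda>g. of_int k * hrep a g)"
  by (simp add: times_hs.rep_eq hrep_of_int hmul_const_left)

lemma hrep_prod_list: "hrep (prod_list xs) = foldr hmul (map hrep xs) hone"
  by (induction xs) (simp_all add: one_hs.rep_eq times_hs.rep_eq)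

definition hs_deg :: "hs \<Rightarrow> real" where
  "hs_deg x = hdeg (hrep x)"

definition hs_lc :: "hs \<Rightarrow> complex" where
  "hs_lc x = hrep x (hs_deg x)"

lemma hs_lc_nonzero: "x \<noteq> 0 \<Longrightarrow> hs_lc x \<noteq> 0"
  unfolding hs_lc_def hs_deg_def using hdeg_coeff_nonzero(1)[OF is_hahn_hrep] hrep_eq_hzero_iff by blast

lemma hrep_below_hs_deg: "g < hs_deg x \<Longrightarrow> hrep x g = 0"
  unfolding hs_deg_def using coeff_below_hdeg[OF is_hahn_hrep] by blast

lemma hs_deg_lc_mult:
  assumes "x \<noteq> 0" "y \<noteq> 0"
  shows "hs_deg (x * y) = hs_deg x + hs_deg y" "hs_lc (x * y) = hs_lc x * hs_lc y"
proof -
  have "hrep x \<noteq> hzero" "hrep y \<noteq> hzero" using assms hrep_eq_hzero_iff by auto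
  then show "hs_deg (x * y) = hs_deg x + hs_deg y" "hs_lc (x * y) = hs_lc x * hs_lc y"
    unfolding hs_lc_def hs_deg_def times_hs.rep_eq
    using hmul_nonzero(2)[OF is_hahn_hrep is_hahn_hrep] hmul_coeff_hdeg_sum(1)[OF is_hahn_hrep is_hahn_hrep]
    by simp_all
qed

lemma hs_deg_lc_prod:
  assumes "finite F" "\<And>i. i \<in> F \<Longrightarrow> f i \<noteq> 0"
  shows "hs_deg (prod f F) = (\<Sum>i\<in>F. hs_deg (f i))" "hs_lc (prod f F) = (\<Prod>i\<in>F. hs_lc (f i))"
proof -
  have "hs_deg (prod f F) = (\<Sum>i\<in>F. hs_deg (f i)) \<and> hs_lc (prod f F) = (\<Prod>i\<in>F. hs_lc (f i))"
    using assms
  proof (induction F rule: finite_induct)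
    case empty
    have "hs_deg 1 = 0" unfolding hs_deg_def one_hs.rep_eq by (rule hdeg_eqI) (auto simp: hone_def)
    then show ?case by (simp add: hs_lc_def one_hs.rep_eq hone_def)
  next
    case (insert x F)
    then have "f x \<noteq> 0" "prod f F \<noteq> 0" by auto
    then show ?case using insert hs_deg_lc_mult[of "f x" "prod f F"] by simp
  qed
  then show "hs_deg (prod f F) = (\<Sum>i\<in>F. hs_deg (f i))" "hs_lc (prod f F) = (\<Prod>i\<in>F. hs_lc (f i))"
    by auto
qed

lemma sum_coeff_at_min_deg:
  fixes X :: "'a \<Rightarrow> hs" and s :: "'a \<Rightarrow> complex"
  assumes "finite P" "\<And>p. p \<in> P \<Longrightarrow> m \<le> hs_deg (X p)"
    and "\<And>p. p \<in> P \<Longrightarrow> hs_deg (X p) = m \<Longrightarrow> s p * hs_lc (X p) = c"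
  shows "(\<Sum>p\<in>P. s p * hrep (X p) m) = of_nat (card {p \<in> P. hs_deg (X p) = m}) * c"
proof -
  have "(\<Sum>p\<in>P. s p * hrep (X p) m) = (\<Sum>p\<in>P. if hs_deg (X p) = m then c else 0)"
  proof (rule sum.cong)
    fix p assume p: "p \<in> P"
    show "s p * hrep (X p) m = (if hs_deg (X p) = m then c else 0)"
      using assms(2,3)[OF p] hrep_below_hs_deg[of m "X p"] by (auto simp: hs_lc_def)
  qed simp
  then show ?thesis using assms(1) by (simp add: sum.If_cases Int_def)
qed

section \<open>Minors as determinants\<close>

lemma hrep_det_mat_habs:
  "hrep (det (mat r r (\<lambda>(i, j). habs (M i j)))) =
     (\<lambda>g. \<Sum>p | p permutes {..<r}. of_int (sign p) * hrep (\<Prod>i = 0..<r. habs (M i (p i))) g)"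
  unfolding det_def by (simp add: atLeast0LessThan hrep_sum hrep_of_int_mult)

lemma hdet_eq_hrep_det:
  assumes "\<And>i j. i < r \<Longrightarrow> j < r \<Longrightarrow> is_hahn (M i j)"
  shows "hdet r M = hrep (det (mat r r (\<lambda>(i, j). habs (M i j))))"
  unfolding hrep_det_mat_habs hdet_def
proof (intro ext sum.cong refl)
  fix g p assume p: "p \<in> {p. p permutes {..<r}}"
  have entries: "map (\<lambda>i. hrep (habs (M i (p i)))) [0..<r] = map (\<lambda>k. M k (p k)) [0..<r]"
  proof (rule map_cong[OF refl])
    fix i assume "i \<in> set [0..<r]"
    then have "i < r" "p i < r" using permutes_in_image[of p "{..<r}" i] p by auto
    then show "hrep (habs (M i (p i))) = M i (p i)" using assms by (simp add: hrep_habs)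
  qed
  have "(\<Prod>i = 0..<r. habs (M i (p i))) = prod_list (map (\<lambda>i. habs (M i (p i))) [0..<r])"
    by (subst prod.distinct_set_conv_list[symmetric]) auto
  then have "hrep (\<Prod>i = 0..<r. habs (M i (p i))) = foldr hmul (map (\<lambda>k. M k (p k)) [0..<r]) hone"
    by (simp only: hrep_prod_list map_map o_def entries)
  then show "complex_of_int (sign p) * foldr hmul (map (\<lambda>k. M k (p k)) [0..<r]) hone g =
      of_int (sign p) * hrep (\<Prod>i = 0..<r. habs (M i (p i))) g" by simp
qed

text \<open>Chio condensation: multiply on the right by the block matrix [[c I, 0], [-y, 1]].\<close>
lemma chio_condensation:
  fixes B :: "'a::idom mat"
  assumes B: "B \<in> carrier_mat r r" and x: "x \<in> carrier_mat r 1" and y: "y \<in> carrier_mat 1 r"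
  shows "det (four_block_mat B x y (c \<cdot>\<^sub>m 1\<^sub>m 1)) * c ^ r = det (c \<cdot>\<^sub>m B - x * y) * c"
proof -
  let ?C = "c \<cdot>\<^sub>m 1\<^sub>m 1 :: 'a mat"
  let ?M = "four_block_mat B x y ?C"
  let ?N = "four_block_mat (c \<cdot>\<^sub>m 1\<^sub>m r) (0\<^sub>m r 1) (- y) (1\<^sub>m 1 :: 'a mat)"
  have M: "?M \<in> carrier_mat (r + 1) (r + 1)" using B x y by (intro four_block_carrier_mat) auto
  have N: "?N \<in> carrier_mat (r + 1) (r + 1)" using y by (intro four_block_carrier_mat) auto
  have "?M * ?N = four_block_mat (B * (c \<cdot>\<^sub>m 1\<^sub>m r) + x * - y) (B * 0\<^sub>m r 1 + x * 1\<^sub>m 1)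
      (y * (c \<cdot>\<^sub>m 1\<^sub>m r) + ?C * - y) (y * 0\<^sub>m r 1 + ?C * 1\<^sub>m 1)"
    by (rule mult_four_block_mat) (use B x y in auto)
  also have "B * (c \<cdot>\<^sub>m 1\<^sub>m r) + x * - y = c \<cdot>\<^sub>m B - x * y"
    using B x y
    by (simp add: mult_smult_distrib[OF B one_carrier_mat] right_mult_one_mat[OF B] add_uminus_minus_mat[of _ r r])
  also have "B * 0\<^sub>m r 1 + x * 1\<^sub>m 1 = x" using B x by simp
  also have "y * (c \<cdot>\<^sub>m 1\<^sub>m r) + ?C * - y = 0\<^sub>m 1 r"
    using y by (intro eq_matI) (auto simp: mult_smult_distrib[OF y] mult_smult_assoc_mat)
  also have "y * 0\<^sub>m r 1 + ?C * 1\<^sub>m 1 = ?C" using y by simp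
  finally have MN: "?M * ?N = four_block_mat (c \<cdot>\<^sub>m B - x * y) x (0\<^sub>m 1 r) ?C" .
  have "det ?M * det ?N = det (?M * ?N)" using det_mult[OF M N] ..
  also have "\<dots> = det (c \<cdot>\<^sub>m B - x * y) * det ?C" unfolding MN
    by (rule det_four_block_mat_lower_left_zero) (use B x y in auto)
  also have "det ?C = c" by simp
  also have "det ?N = det (c \<cdot>\<^sub>m 1\<^sub>m r) * det (1\<^sub>m 1 :: 'a mat)"
    by (rule det_four_block_mat_upper_right_zero) (use y in auto)
  also have "\<dots> = c ^ r" by simp
  finally show ?thesis .
qed

definition sorted_nth :: "nat set \<Rightarrow> nat \<Rightarrow> nat" where
  "sorted_nth I = (!) (sorted_list_of_set I)"

definition sorted_index :: "nat set \<Rightarrow> nat \<Rightarrow> nat" where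
  "sorted_index I = the_inv_into {..<card I} (sorted_nth I)"

definition bij_of_perm :: "nat set \<Rightarrow> nat set \<Rightarrow> (nat \<Rightarrow> nat) \<Rightarrow> nat \<Rightarrow> nat" where
  "bij_of_perm I J p = sorted_nth J \<circ> p \<circ> sorted_index I"

definition perm_of_bij :: "nat set \<Rightarrow> nat set \<Rightarrow> (nat \<Rightarrow> nat) \<Rightarrow> nat \<Rightarrow> nat" where
  "perm_of_bij I J \<rho> k = (if k < card I then sorted_index J (\<rho> (sorted_nth I k)) else k)"

lemma bij_betw_sorted_nth: "finite I \<Longrightarrow> bij_betw (sorted_nth I) {..<card I} I"
  unfolding sorted_nth_def by (rule bij_betw_nth) auto

lemma bij_betw_sorted_index: "finite I \<Longrightarrow> bij_betw (sorted_index I) I {..<card I}"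
  unfolding sorted_index_def using bij_betw_the_inv_into[OF bij_betw_sorted_nth] .

lemma sorted_index_nth: "finite I \<Longrightarrow> k < card I \<Longrightarrow> sorted_index I (sorted_nth I k) = k"
  unfolding sorted_index_def using bij_betw_sorted_nth[of I] by (simp add: bij_betw_def the_inv_into_f_f)

lemma sorted_nth_index: "finite I \<Longrightarrow> i \<in> I \<Longrightarrow> sorted_nth I (sorted_index I i) = i"
  unfolding sorted_index_def using bij_betw_sorted_nth[of I] by (simp add: f_the_inv_into_f_bij_betw)

lemma sorted_nth_in: "finite I \<Longrightarrow> k < card I \<Longrightarrow> sorted_nth I k \<in> I"
  using bij_betw_sorted_nth[of I] by (auto simp: bij_betw_def)

lemma sorted_index_less: "finite I \<Longrightarrow> i \<in> I \<Longrightarrow> sorted_index I i < card I"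
  using bij_betw_sorted_index[of I] by (auto simp: bij_betw_def)

lemma sorted_nth_inject:
  "finite I \<Longrightarrow> k < card I \<Longrightarrow> l < card I \<Longrightarrow> sorted_nth I k = sorted_nth I l \<longleftrightarrow> k = l"
  using bij_betw_sorted_nth[of I] by (auto simp: bij_betw_def inj_on_def)

lemma sorted_nth_insert_greatest:
  assumes "finite I" "\<And>i. i \<in> I \<Longrightarrow> i < n" "k \<le> card I"
  shows "sorted_nth (insert n I) k = (if k < card I then sorted_nth I k else n)"
proof -
  have "sorted_list_of_set (insert n I) = sorted_list_of_set I @ [n]"
  proof (rule sorted_distinct_set_unique)
    show "sorted (sorted_list_of_set I @ [n])" "distinct (sorted_list_of_set I @ [n])"
      using assms by (auto simp: sorted_append less_imp_le)
    show "set (sorted_list_of_set (insert n I)) = set (sorted_list_of_set I @ [n])"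
      using assms(1) by (simp only: set_sorted_list_of_set finite_insert set_append) auto
  qed simp_all
  then show ?thesis using assms(3) by (simp add: sorted_nth_def nth_append)
qed

lemma bij_of_perm_sorted_nth:
  "finite I \<Longrightarrow> k < card I \<Longrightarrow> bij_of_perm I J p (sorted_nth I k) = sorted_nth J (p k)"
  unfolding bij_of_perm_def by (simp add: sorted_index_nth)

lemma bij_betw_bij_of_perm:
  assumes "finite I" "finite J" "card I = r" "card J = r" "p permutes {..<r}"
  shows "bij_betw (bij_of_perm I J p) I J"
  unfolding bij_of_perm_def
  using bij_betw_sorted_index[OF assms(1)] permutes_imp_bij[OF assms(5)] bij_betw_sorted_nth[OF assms(2)] assms(3,4)
  by (auto intro: bij_betw_trans)

lemma perm_of_bij_permutes:
  assumes "finite I" "finite J" "card I = r" "card J = r" "bij_betw \<rho> I J"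
  shows "perm_of_bij I J \<rho> permutes {..<r}"
proof (rule bij_imp_permutes)
  have "bij_betw (sorted_index J \<circ> \<rho> \<circ> sorted_nth I) {..<r} {..<r}"
    using bij_betw_sorted_index[OF assms(2)] assms(5) bij_betw_sorted_nth[OF assms(1)] assms(3,4)
    by (auto intro: bij_betw_trans)
  then show "bij_betw (perm_of_bij I J \<rho>) {..<r} {..<r}"
    by (rule bij_betw_cong[THEN iffD1, rotated]) (auto simp: perm_of_bij_def assms(3))
  show "\<And>x. x \<notin> {..<r} \<Longrightarrow> perm_of_bij I J \<rho> x = x" by (auto simp: perm_of_bij_def assms(3))
qed

lemma bij_of_perm_of_bij:
  assumes "finite I" "finite J" "card I = card J" "bij_betw \<rho> I J" "i \<in> I"
  shows "bij_of_perm I J (perm_of_bij I J \<rho>) i = \<rho> i"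
proof -
  have "\<rho> i \<in> J" using assms(4,5) by (auto simp: bij_betw_def)
  then show ?thesis unfolding bij_of_perm_def perm_of_bij_def
    using sorted_index_less[OF assms(1,5)] sorted_nth_index[OF assms(1,5)] sorted_nth_index[OF assms(2)] by simp
qed

lemma hminor_eq_hrep_det:
  assumes "finite I" "finite J" "card J = card I" "\<And>i j. i \<in> I \<Longrightarrow> j \<in> J \<Longrightarrow> is_hahn (L i j)"
  shows "hminor L I J =
    hrep (det (mat (card I) (card I) (\<lambda>(k, l). habs (L (sorted_nth I k) (sorted_nth J l)))))"
  unfolding hminor_def sorted_nth_def[symmetric]
  by (rule hdet_eq_hrep_det) (use assms sorted_nth_in in auto)

section \<open>Symmetric tropical singularity\<close>

lemma trop_value_cong: "(\<And>i. i \<in> I \<Longrightarrow> \<rho> i = \<rho>' i) \<Longrightarrow> trop_value A I \<rho> = trop_value A I \<rho>'"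
  unfolding trop_value_def by simp

lemma sym_monomial_cong: "(\<And>i. i \<in> I \<Longrightarrow> \<rho> i = \<rho>' i) \<Longrightarrow> sym_monomial I \<rho> = sym_monomial I \<rho>'"
  unfolding sym_monomial_def by (cases "finite I") (auto intro: image_mset_cong)

lemma trop_value_remove:
  "finite I \<Longrightarrow> i \<in> I \<Longrightarrow> trop_value A I \<rho> = A i (\<rho> i) + trop_value A (I - {i}) \<rho>"
  unfolding trop_value_def by (rule sum.remove)

lemma sym_monomial_remove:
  "finite I \<Longrightarrow> i \<in> I \<Longrightarrow> sym_monomial I \<rho> = add_mset {i, \<rho> i} (sym_monomial (I - {i}) \<rho>)"
  unfolding sym_monomial_def by (simp add: mset_set.remove[of I i])

lemma trop_value_bij_of_perm:
  assumes "finite I" "card I = r"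
  shows "trop_value A I (bij_of_perm I J p) = (\<Sum>k<r. A (sorted_nth I k) (sorted_nth J (p k)))"
  unfolding trop_value_def sum.reindex_bij_betw[OF bij_betw_sorted_nth[OF assms(1)], symmetric]
  using assms by (simp add: bij_of_perm_sorted_nth)

lemma sym_monomial_bij_of_perm:
  assumes "finite I" "card I = r"
  shows "sym_monomial I (bij_of_perm I J p) =
    image_mset (\<lambda>k. {sorted_nth I k, sorted_nth J (p k)}) (mset_set {..<r})"
proof -
  have "mset_set I = image_mset (sorted_nth I) (mset_set {..<r})"
    using bij_betw_sorted_nth[OF assms(1)] assms(2) by (simp add: image_mset_mset_set bij_betw_def)
  then show ?thesis
    unfolding sym_monomial_def using assms by (auto simp: multiset.map_comp o_def bij_of_perm_sorted_nth intro: image_mset_cong)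
qed

lemma exists_min_trop_value:
  assumes "finite I" "finite J" "card I = card J"
  obtains \<rho>1 where "bij_betw \<rho>1 I J" "\<And>\<rho>. bij_betw \<rho> I J \<Longrightarrow> trop_value A I \<rho>1 \<le> trop_value A I \<rho>"
proof -
  let ?P = "{p. p permutes {..<card I}}"
  let ?V = "(\<lambda>p. trop_value A I (bij_of_perm I J p)) ` ?P"
  have fin: "finite ?V" by (simp add: finite_permutations)
  have "id \<in> ?P" by (simp add: permutes_id)
  then have "Min ?V \<in> ?V" using Min_in[OF fin] by blast
  then obtain p0 where p0: "p0 \<in> ?P" "trop_value A I (bij_of_perm I J p0) = Min ?V" by auto
  show ?thesis
  proof (rule that)
    show "bij_betw (bij_of_perm I J p0) I J"
      using bij_betw_bij_of_perm[OF assms(1,2) refl assms(3)[symmetric]] p0(1) by simp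
    fix \<rho> assume b: "bij_betw \<rho> I J"
    have "trop_value A I \<rho> = trop_value A I (bij_of_perm I J (perm_of_bij I J \<rho>))"
      by (rule trop_value_cong) (simp add: bij_of_perm_of_bij[OF assms b])
    moreover have "perm_of_bij I J \<rho> \<in> ?P"
      using perm_of_bij_permutes[OF assms(1,2) refl assms(3)[symmetric] b] by simp
    ultimately show "trop_value A I (bij_of_perm I J p0) \<le> trop_value A I \<rho>"
      using Min_le[OF fin] p0(2) by auto
  qed
qed

lemma sym_trop_singular_cong:
  assumes "\<And>i j. i \<in> I \<Longrightarrow> j \<in> J \<Longrightarrow> A i j = B i j" "sym_trop_singular A I J"
  shows "sym_trop_singular B I J"
proof -
  have "trop_value A I \<rho> = trop_value B I \<rho>" if "bij_betw \<rho> I J" for \<rho>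
    unfolding trop_value_def using that assms(1) by (intro sum.cong) (auto simp: bij_betw_def)
  then show ?thesis using assms(2) unfolding sym_trop_singular_def by metis
qed

text \<open>Removing a pair (i, \<rho>1 i) of a minimal matching \<rho>1 keeps the rest minimal, so a second
  minimal matching of the smaller submatrix, extended by the same pair, is one for I and J.\<close>
lemma sym_trop_singular_extend:
  assumes fin: "finite I" and i0: "i0 \<in> I" and b1: "bij_betw \<rho>1 I J"
    and min1: "\<And>\<rho>. bij_betw \<rho> I J \<Longrightarrow> trop_value A I \<rho>1 \<le> trop_value A I \<rho>"
    and sub: "sym_trop_singular A (I - {i0}) (J - {\<rho>1 i0})"
  shows "sym_trop_singular A I J"
proof -
  define j0 where "j0 = \<rho>1 i0"
  define I0 where "I0 = I - {i0}"
  define J0 where "J0 = J - {j0}"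
  have j0J: "j0 \<in> J" using b1 i0 unfolding bij_betw_def j0_def by blast
  have b10: "bij_betw \<rho>1 I0 J0" unfolding I0_def J0_def
    by (rule bij_betw_DiffI[OF b1]) (use i0 j0J in \<open>auto simp: j0_def\<close>)
  obtain \<sigma>1 \<sigma>2 where s1: "bij_betw \<sigma>1 I0 J0" and s2: "bij_betw \<sigma>2 I0 J0"
    and smon: "sym_monomial I0 \<sigma>1 \<noteq> sym_monomial I0 \<sigma>2"
    and sval: "trop_value A I0 \<sigma>2 = trop_value A I0 \<sigma>1"
    and smin: "\<forall>\<rho>. bij_betw \<rho> I0 J0 \<longrightarrow> trop_value A I0 \<sigma>1 \<le> trop_value A I0 \<rho>"
    using sub unfolding sym_trop_singular_def I0_def J0_def j0_def by blast
  have ext: "bij_betw (\<sigma>(i0 := j0)) I J" if s: "bij_betw \<sigma> I0 J0" for \<sigma>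
  proof -
    have "bij_betw (\<sigma>(i0 := j0)) I0 J0" using s by (rule bij_betw_cong[THEN iffD1, rotated]) (auto simp: I0_def)
    then have "bij_betw (\<sigma>(i0 := j0)) (I0 \<union> {i0}) (J0 \<union> {(\<sigma>(i0 := j0)) i0})"
      by (rule notIn_Un_bij_betw[rotated 2]) (auto simp: I0_def J0_def)
    moreover have "I0 \<union> {i0} = I" "J0 \<union> {(\<sigma>(i0 := j0)) i0} = J" using i0 j0J by (auto simp: I0_def J0_def)
    ultimately show ?thesis by simp
  qed
  have val_ext: "trop_value A I (\<sigma>(i0 := j0)) = A i0 j0 + trop_value A I0 \<sigma>" for \<sigma>
    using trop_value_remove[OF fin i0, of A "\<sigma>(i0 := j0)"] trop_value_cong[of "I - {i0}" "\<sigma>(i0 := j0)" \<sigma>]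
    by (simp add: I0_def)
  have mon_ext: "sym_monomial I (\<sigma>(i0 := j0)) = add_mset {i0, j0} (sym_monomial I0 \<sigma>)" for \<sigma>
    using sym_monomial_remove[OF fin i0, of "\<sigma>(i0 := j0)"] sym_monomial_cong[of "I - {i0}" "\<sigma>(i0 := j0)" \<sigma>]
    by (simp add: I0_def)
  have val1: "trop_value A I \<rho>1 = A i0 j0 + trop_value A I0 \<rho>1"
    using trop_value_remove[OF fin i0] by (simp add: I0_def j0_def)
  have mon1: "sym_monomial I \<rho>1 = add_mset {i0, j0} (sym_monomial I0 \<rho>1)"
    using sym_monomial_remove[OF fin i0] by (simp add: I0_def j0_def)
  have "trop_value A I0 \<sigma>1 \<le> trop_value A I0 \<rho>1" using smin b10 by blast
  moreover have "trop_value A I \<rho>1 \<le> trop_value A I (\<sigma>1(i0 := j0))" using min1 ext[OF s1] by blast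
  ultimately have eq1: "trop_value A I0 \<sigma>1 = trop_value A I0 \<rho>1" using val1 val_ext[of \<sigma>1] by simp
  obtain \<sigma> where s: "bij_betw \<sigma> I0 J0" and sv: "trop_value A I0 \<sigma> = trop_value A I0 \<rho>1"
    and sm: "sym_monomial I0 \<sigma> \<noteq> sym_monomial I0 \<rho>1"
  proof (cases "sym_monomial I0 \<sigma>1 = sym_monomial I0 \<rho>1")
    case True
    then show ?thesis using that[OF s2] sval eq1 smon by simp
  next
    case False
    then show ?thesis using that[OF s1] eq1 by simp
  qed
  show ?thesis unfolding sym_trop_singular_def
  proof (intro exI conjI allI impI)
    show "bij_betw \<rho>1 I J" by fact
    show "bij_betw (\<sigma>(i0 := j0)) I J" using ext[OF s] .
    show "sym_monomial I \<rho>1 \<noteq> sym_monomial I (\<sigma>(i0 := j0))" using mon1 mon_ext[of \<sigma>] sm by simp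
    show "trop_value A I (\<sigma>(i0 := j0)) = trop_value A I \<rho>1" using val_ext[of \<sigma>] val1 sv by simp
  qed (rule min1)
qed

section \<open>Permutations with equal symmetric monomials\<close>

lemma sym_monomial_eq_moved_point:
  assumes fin: "finite I" and mon: "sym_monomial I \<rho> = sym_monomial I \<rho>'"
    and iI: "i \<in> I" and moved: "\<rho> i \<noteq> \<rho>' i"
  shows "\<rho>' i \<in> I" "\<rho> (\<rho>' i) = i" "\<rho>' (\<rho>' i) \<noteq> i"
proof -
  have cnt: "card {j \<in> I. {j, \<rho> j} = e} = card {j \<in> I. {j, \<rho>' j} = e}" for e
    using arg_cong[OF mon, of "\<lambda>M. count M e"]
    unfolding sym_monomial_def count_image_mset_eq_card_vimage[OF fin] by (simp add: vimage_def Int_def conj_commute)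
  have "card {j \<in> I. {j, \<rho>' j} = {i, \<rho>' i}} \<noteq> 0" using fin iI by auto
  then have "{j \<in> I. {j, \<rho> j} = {i, \<rho>' i}} \<noteq> {}" using cnt by (metis card.empty)
  then obtain j where j: "j \<in> I" "{j, \<rho> j} = {i, \<rho>' i}" by blast
  have "j \<noteq> i" using j(2) moved by (auto simp: doubleton_eq_iff)
  then have j_eq: "j = \<rho>' i" "\<rho> j = i" using j(2) by (auto simp: doubleton_eq_iff)
  then show "\<rho>' i \<in> I" "\<rho> (\<rho>' i) = i" using j(1) by auto
  show "\<rho>' (\<rho>' i) \<noteq> i"
  proof
    assume returns: "\<rho>' (\<rho>' i) = i"
    let ?b = "\<rho>' i"
    have "{i, ?b} \<subseteq> {j \<in> I. {j, \<rho>' j} = {i, ?b}}"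
      using iI j j_eq returns by (auto simp: insert_commute)
    then have "card {i, ?b} \<le> card {j \<in> I. {j, \<rho>' j} = {i, ?b}}"
      using fin by (intro card_mono) auto
    then have "card {i, ?b} \<le> card {j \<in> I. {j, \<rho> j} = {i, ?b}}"
      using cnt[of "{i, ?b}"] by simp
    moreover have "card {i, ?b} = 2" using \<open>j \<noteq> i\<close> j_eq by simp
    moreover have "{j \<in> I. {j, \<rho> j} = {i, ?b}} \<subseteq> {?b}"
      using moved by (auto simp: doubleton_eq_iff)
    then have "card {j \<in> I. {j, \<rho> j} = {i, ?b}} \<le> 1" using card_mono[of "{?b}"] by fastforce
    ultimately show False by simp
  qed
qed

text \<open>Equal symmetric monomials differ by reversing some cycles; on the moved points \<rho>' then
  agrees with \<rho> composed with the square of the permutation that \<rho>' induces there.\<close>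
lemma sym_monomial_eqE:
  assumes fin: "finite I" and mon: "sym_monomial I \<rho> = sym_monomial I \<rho>'"
  obtains \<tau> where "\<tau> permutes I" "\<And>i. i \<in> I \<Longrightarrow> \<rho>' i = \<rho> (\<tau> (\<tau> i))"
proof -
  define D where "D = {i \<in> I. \<rho> i \<noteq> \<rho>' i}"
  note moved = sym_monomial_eq_moved_point[OF fin mon]
  have D_closed: "\<rho>' i \<in> D" "\<rho> (\<rho>' i) = i" if "i \<in> D" for i
  proof -
    have "i \<in> I" "\<rho> i \<noteq> \<rho>' i" using that by (auto simp: D_def)
    from moved[OF this] have "\<rho>' i \<in> I" "\<rho> (\<rho>' i) = i" "i \<noteq> \<rho>' (\<rho>' i)" by auto
    then show "\<rho>' i \<in> D" "\<rho> (\<rho>' i) = i" unfolding D_def by simp_all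
  qed
  define \<tau> where "\<tau> = (\<lambda>x. if x \<in> D then \<rho>' x else x)"
  have "inj_on \<tau> I"
  proof (rule inj_onI)
    fix x y assume xy: "x \<in> I" "y \<in> I" "\<tau> x = \<tau> y"
    show "x = y"
    proof (cases "x \<in> D"; cases "y \<in> D")
      assume "x \<in> D" "y \<in> D"
      then have "\<rho>' x = \<rho>' y" using xy(3) by (simp add: \<tau>_def)
      then show ?thesis using D_closed(2) \<open>x \<in> D\<close> \<open>y \<in> D\<close> by metis
    qed (use xy(3) D_closed(1) in \<open>auto simp: \<tau>_def\<close>)
  qed
  moreover have "\<tau> ` I \<subseteq> I" using D_closed by (auto simp: \<tau>_def D_def)
  ultimately have "bij_betw \<tau> I I" using endo_inj_surj[OF fin] by (simp add: bij_betw_def)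
  then have "\<tau> permutes I" by (rule bij_imp_permutes) (auto simp: \<tau>_def D_def)
  moreover have "\<rho>' i = \<rho> (\<tau> (\<tau> i))" if "i \<in> I" for i
    using that D_closed[of i] D_closed[of "\<rho>' i"] by (auto simp: \<tau>_def D_def)
  ultimately show ?thesis using that by blast
qed

lemma sign_eq_if_sym_monomial_eq:
  assumes fI: "finite I" and fJ: "finite J" and cI: "card I = r" and cJ: "card J = r"
    and p: "p permutes {..<r}" and p': "p' permutes {..<r}"
    and mon: "sym_monomial I (bij_of_perm I J p) = sym_monomial I (bij_of_perm I J p')"
  shows "sign p = sign p'"
proof -
  obtain \<tau> where \<tau>: "\<tau> permutes I" and twist: "\<And>i. i \<in> I \<Longrightarrow> bij_of_perm I J p' i = bij_of_perm I J p (\<tau> (\<tau> i))"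
    using sym_monomial_eqE[OF fI mon] by blast
  define t where "t = perm_of_bij I I \<tau>"
  have t: "t permutes {..<r}" unfolding t_def using perm_of_bij_permutes[OF fI fI cI cI permutes_imp_bij[OF \<tau>]] .
  have t_less: "t k < r" if "k < r" for k using permutes_in_image[OF t] that by simp
  have t_nth: "sorted_nth I (t k) = \<tau> (sorted_nth I k)" if "k < r" for k
    using that sorted_nth_in[OF fI] sorted_nth_index[OF fI] permutes_in_image[OF \<tau>] cI by (simp add: t_def perm_of_bij_def)
  have "p' = p \<circ> (t \<circ> t)"
  proof
    fix k
    show "p' k = (p \<circ> (t \<circ> t)) k"
    proof (cases "k < r")
      case True
      have "sorted_nth J (p' k) = bij_of_perm I J p' (sorted_nth I k)"
        using bij_of_perm_sorted_nth[OF fI] True cI by simp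
      also have "\<dots> = bij_of_perm I J p (sorted_nth I (t (t k)))"
        using twist[OF sorted_nth_in[OF fI]] True cI t_nth[OF True] t_nth[OF t_less[OF True]] by simp
      also have "\<dots> = sorted_nth J (p (t (t k)))"
        using bij_of_perm_sorted_nth[OF fI] t_less[OF t_less[OF True]] cI by simp
      finally show ?thesis
        using sorted_nth_inject[OF fJ] permutes_in_image[OF p'] permutes_in_image[OF p] t_less True cJ by simp
    next
      case False
      then show ?thesis using t p p' by (simp add: permutes_def)
    qed
  qed
  moreover have "permutation p" "permutation t" using p t by (auto simp: permutation_permutes)
  ultimately show ?thesis by (simp add: sign_compose permutation_compose sign_idempotent)
qed

section \<open>Minors of a lift\<close>

definition lift_lc :: "(nat \<Rightarrow> nat \<Rightarrow> hahn) \<Rightarrow> nat set \<Rightarrow> complex" where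
  "lift_lc L e = L (Min e) (Max e) (hdeg (L (Min e) (Max e)))"

lemma lift_minor_term_leading:
  assumes lift: "symmetric_lift n A L" and I: "I \<subseteq> {..<n}" "card I = r" and J: "J \<subseteq> {..<n}" "card J = r"
    and p: "p permutes {..<r}"
  defines "X \<equiv> \<Prod>k = 0..<r. habs (L (sorted_nth I k) (sorted_nth J (p k)))"
  shows "X \<noteq> 0" "hs_deg X = trop_value A I (bij_of_perm I J p)"
    and "hs_lc X = prod_mset (image_mset (lift_lc L) (sym_monomial I (bij_of_perm I J p)))"
proof -
  have fI: "finite I" and fJ: "finite J" using I(1) J(1) finite_subset by auto
  have Lh: "is_hahn (L i j)" "L i j \<noteq> hzero" "hdeg (L i j) = A i j" if "i < n" "j < n" for i j
    using lift that unfolding symmetric_lift_def by auto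
  have Ls: "L i j = L j i" if "i < n" "j < n" for i j
    using lift that unfolding symmetric_lift_def symmetric_mat_def by auto
  have entry: "sorted_nth I k < n" "sorted_nth J (p k) < n" if "k < r" for k
    using that sorted_nth_in[OF fI, of k] sorted_nth_in[OF fJ, of "p k"] permutes_in_image[OF p, of k] I J
    by auto
  let ?e = "\<lambda>k. habs (L (sorted_nth I k) (sorted_nth J (p k)))"
  have nonzero: "?e k \<noteq> 0" if "k \<in> {0..<r}" for k
    using habs_nonzero Lh(1,2) entry that by simp
  then show "X \<noteq> 0" unfolding X_def by simp
  have "hs_deg X = (\<Sum>k\<in>{0..<r}. hs_deg (?e k))"
    unfolding X_def using nonzero by (rule hs_deg_lc_prod(1)[OF finite_atLeastLessThan])
  also have "\<dots> = (\<Sum>k<r. A (sorted_nth I k) (sorted_nth J (p k)))"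
    unfolding atLeast0LessThan using entry Lh by (intro sum.cong) (auto simp: hs_deg_def hrep_habs)
  finally show "hs_deg X = trop_value A I (bij_of_perm I J p)" using trop_value_bij_of_perm[OF fI I(2)] by simp
  have lc_entry: "hs_lc (habs (L i j)) = lift_lc L {i, j}" if "i < n" "j < n" for i j
    using that Lh(1)[OF that] Ls[OF that]
    by (cases "i \<le> j") (auto simp: hs_lc_def hs_deg_def hrep_habs lift_lc_def min_def max_def)
  have "hs_lc X = (\<Prod>k\<in>{0..<r}. hs_lc (?e k))"
    unfolding X_def using nonzero by (rule hs_deg_lc_prod(2)[OF finite_atLeastLessThan])
  also have "\<dots> = (\<Prod>k<r. lift_lc L {sorted_nth I k, sorted_nth J (p k)})"
    unfolding atLeast0LessThan using entry lc_entry by (intro prod.cong) auto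
  also have "\<dots> = prod_mset (image_mset (lift_lc L) (sym_monomial I (bij_of_perm I J p)))"
    unfolding sym_monomial_bij_of_perm[OF fI I(2)] prod_unfold_prod_mset by (simp add: multiset.map_comp o_def)
  finally show "hs_lc X = prod_mset (image_mset (lift_lc L) (sym_monomial I (bij_of_perm I J p)))" .
qed

lemma sym_trop_singular_if_lift_rank_le:
  assumes lift: "symmetric_lift n A L" and rk: "rank_le_pred n r L"
    and I: "I \<subseteq> {..<n}" "card I = r" and J: "J \<subseteq> {..<n}" "card J = r"
  shows "sym_trop_singular A I J"
proof (rule ccontr)
  assume not_sing: "\<not> sym_trop_singular A I J"
  have fI: "finite I" and fJ: "finite J" using I(1) J(1) finite_subset by auto
  let ?P = "{p. p permutes {..<r}}"
  define X where "X p = (\<Prod>k = 0..<r. habs (L (sorted_nth I k) (sorted_nth J (p k))))" for p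
  note leading = lift_minor_term_leading[OF lift I J, folded X_def]
  obtain \<rho>1 where b1: "bij_betw \<rho>1 I J"
    and min1: "\<And>\<rho>. bij_betw \<rho> I J \<Longrightarrow> trop_value A I \<rho>1 \<le> trop_value A I \<rho>"
    using exists_min_trop_value[OF fI fJ] I(2) J(2) by metis
  define p0 where "p0 = perm_of_bij I J \<rho>1"
  have p0: "p0 \<in> ?P" using perm_of_bij_permutes[OF fI fJ I(2) J(2) b1] by (simp add: p0_def)
  have \<rho>1_p0: "bij_of_perm I J p0 i = \<rho>1 i" if "i \<in> I" for i
    using bij_of_perm_of_bij[OF fI fJ _ b1 that] I(2) J(2) by (simp add: p0_def)
  define m where "m = trop_value A I \<rho>1"
  have deg_p0: "hs_deg (X p0) = m"
    unfolding leading(2)[OF p0[simplified]] m_def by (rule trop_value_cong) (simp add: \<rho>1_p0)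
  have mon_p0: "sym_monomial I (bij_of_perm I J p0) = sym_monomial I \<rho>1"
    by (rule sym_monomial_cong) (simp add: \<rho>1_p0)
  have bij_p: "bij_betw (bij_of_perm I J p) I J" if "p \<in> ?P" for p
    using bij_betw_bij_of_perm[OF fI fJ I(2) J(2)] that by simp
  have min_p: "m \<le> hs_deg (X p)" if "p \<in> ?P" for p
    using min1[OF bij_p[OF that]] leading(2) that by (simp add: m_def)
  have mon_p: "sym_monomial I (bij_of_perm I J p) = sym_monomial I (bij_of_perm I J p0)"
    if "p \<in> ?P" "hs_deg (X p) = m" for p
  proof (rule ccontr)
    assume "sym_monomial I (bij_of_perm I J p) \<noteq> sym_monomial I (bij_of_perm I J p0)"
    then have "sym_trop_singular A I J"
      unfolding sym_trop_singular_def using b1 bij_p that min1 leading(2) mon_p0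
      by (intro exI[of _ \<rho>1] exI[of _ "bij_of_perm I J p"]) (auto simp: m_def)
    then show False using not_sing by simp
  qed
  have same_term: "of_int (sign p) * hs_lc (X p) = of_int (sign p0) * hs_lc (X p0)"
    if "p \<in> ?P" "hs_deg (X p) = m" for p
    using sign_eq_if_sym_monomial_eq[OF fI fJ I(2) J(2) _ _ mon_p[OF that]] leading(3) mon_p[OF that] that p0
    by simp
  have "(\<Sum>p\<in>?P. of_int (sign p) * hrep (X p) m) =
      of_nat (card {p \<in> ?P. hs_deg (X p) = m}) * (of_int (sign p0) * hs_lc (X p0))"
    by (rule sum_coeff_at_min_deg) (simp_all add: finite_permutations min_p same_term)
  moreover have "card {p \<in> ?P. hs_deg (X p) = m} \<noteq> 0"
    using p0 deg_p0 by (simp add: finite_permutations card_eq_0_iff) blast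
  moreover have "of_int (sign p0) * hs_lc (X p0) \<noteq> 0"
    using hs_lc_nonzero leading(1) p0 by (simp add: sign_def)
  moreover have "(\<Sum>p\<in>?P. of_int (sign p) * hrep (X p) m) = hminor L I J m"
  proof -
    have "\<And>i j. i \<in> I \<Longrightarrow> j \<in> J \<Longrightarrow> is_hahn (L i j)"
      using lift I(1) J(1) unfolding symmetric_lift_def by auto
    then show ?thesis
      using hminor_eq_hrep_det[OF fI fJ] hrep_det_mat_habs[of r "\<lambda>k l. L (sorted_nth I k) (sorted_nth J l)"] I(2) J(2)
      by (simp add: X_def)
  qed
  moreover have "hminor L I J = hzero" using rk I J unfolding rank_le_pred_def by blast
  ultimately show False by (simp add: hzero_def)
qed

section \<open>Bordering by a large constant\<close>

definition border_mat :: "nat \<Rightarrow> real \<Rightarrow> (nat \<Rightarrow> nat \<Rightarrow> real) \<Rightarrow> nat \<Rightarrow> nat \<Rightarrow> real" where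
  "border_mat n N A i j = (if i = n \<and> j = n then 0 else if i = n \<or> j = n then N else A i j)"

lemma symmetric_mat_border_mat: "symmetric_mat n A \<Longrightarrow> symmetric_mat (n + 1) (border_mat n N A)"
  unfolding symmetric_mat_def border_mat_def by auto

text \<open>Otherwise swapping the partners of n in I and in J replaces two entries N by the corner 0
  and an entry of A, which is smaller than 2 N.\<close>
lemma border_mat_min_matching_fixes_corner:
  assumes bound: "\<And>i j. i < n \<Longrightarrow> j < n \<Longrightarrow> A i j < N" and N: "0 < N"
    and I: "finite I" "I \<subseteq> {..<n + 1}" "n \<in> I" and J: "J \<subseteq> {..<n + 1}" "n \<in> J"
    and b1: "bij_betw \<rho>1 I J"
    and min1: "\<And>\<rho>. bij_betw \<rho> I J \<Longrightarrow> trop_value (border_mat n N A) I \<rho>1 \<le> trop_value (border_mat n N A) I \<rho>"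
  shows "\<rho>1 n = n"
proof (rule ccontr)
  assume ne: "\<rho>1 n \<noteq> n"
  let ?A' = "border_mat n N A"
  define j where "j = \<rho>1 n"
  obtain i where iI: "i \<in> I" and ri: "\<rho>1 i = n" using b1 J(2) by (auto simp: bij_betw_def)
  have "i \<noteq> n" using ri ne by auto
  then have i: "i < n" using iI I(2) by auto
  have jl: "j < n" using b1 I(3) J(1) ne by (auto simp: j_def bij_betw_def)
  define \<rho>' where "\<rho>' = \<rho>1 \<circ> Transposition.transpose i n"
  have b': "bij_betw \<rho>' I J" unfolding \<rho>'_def
    by (rule bij_betw_trans[OF permutes_imp_bij[OF permutes_swap_id[OF iI I(3)]] b1])
  have in': "i \<in> I - {n}" using iI \<open>i \<noteq> n\<close> by simp
  have split: "trop_value ?A' I \<rho> = ?A' n (\<rho> n) + ?A' i (\<rho> i) + trop_value ?A' (I - {n} - {i}) \<rho>" for \<rho>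
    using trop_value_remove[OF I(1,3), of ?A' \<rho>] trop_value_remove[OF _ in', of ?A' \<rho>] I(1) by simp
  have rest: "trop_value ?A' (I - {n} - {i}) \<rho>' = trop_value ?A' (I - {n} - {i}) \<rho>1"
    by (rule trop_value_cong) (simp add: \<rho>'_def)
  have "trop_value ?A' I \<rho>' = 0 + A i j + trop_value ?A' (I - {n} - {i}) \<rho>1"
    using split[of \<rho>'] rest ri i jl by (simp add: \<rho>'_def j_def border_mat_def)
  also have "\<dots> < N + N + trop_value ?A' (I - {n} - {i}) \<rho>1"
    using bound[OF i jl] N by simp
  also have "\<dots> = trop_value ?A' I \<rho>1"
    using split[of \<rho>1] ri i jl by (simp add: j_def border_mat_def)
  finally show False using min1[OF b'] by simp
qed

lemma border_mat_sym_trop_singular: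
  assumes sing: "\<And>I J. I \<subseteq> {..<n} \<Longrightarrow> J \<subseteq> {..<n} \<Longrightarrow> card I = r \<Longrightarrow> card J = r \<Longrightarrow> sym_trop_singular A I J"
    and bound: "\<And>i j. i < n \<Longrightarrow> j < n \<Longrightarrow> A i j < N" and N: "0 < N"
    and I: "I \<subseteq> {..<n + 1}" "card I = r + 1" and J: "J \<subseteq> {..<n + 1}" "card J = r + 1"
  shows "sym_trop_singular (border_mat n N A) I J"
proof -
  let ?A' = "border_mat n N A"
  have fI: "finite I" and fJ: "finite J" using I(1) J(1) finite_subset by auto
  obtain \<rho>1 where b1: "bij_betw \<rho>1 I J"
    and min1: "\<And>\<rho>. bij_betw \<rho> I J \<Longrightarrow> trop_value ?A' I \<rho>1 \<le> trop_value ?A' I \<rho>"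
    using exists_min_trop_value[OF fI fJ] I(2) J(2) by metis
  have I_less: "I - {n} \<subseteq> {..<n}" and J_less: "J - {n} \<subseteq> {..<n}" using I(1) J(1) by auto
  obtain i0 where i0: "i0 \<in> I" "I - {i0} \<subseteq> {..<n}" "J - {\<rho>1 i0} \<subseteq> {..<n}"
  proof (cases "n \<in> J")
    case True
    then obtain i0 where i0: "i0 \<in> I" "\<rho>1 i0 = n" using b1 by (auto simp: bij_betw_def)
    have "i0 = n" if "n \<in> I"
      using border_mat_min_matching_fixes_corner[OF bound N fI I(1) that J(1) True b1 min1] i0 b1
      by (metis bij_betw_def inj_on_def that)
    then have "I - {i0} \<subseteq> {..<n}" using I_less I(1) by auto
    then show ?thesis using that i0 J_less by auto
  next
    case False
    have "I \<noteq> {}" using I(2) by auto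
    then obtain i0 where "i0 \<in> I" "I - {i0} \<subseteq> {..<n}" using I_less by (cases "n \<in> I") auto
    then show ?thesis using that J_less False by auto
  qed
  have "card (I - {i0}) = r" "card (J - {\<rho>1 i0}) = r"
    using i0(1) b1 I(2) J(2) fI fJ by (auto simp: bij_betw_def)
  then have "sym_trop_singular A (I - {i0}) (J - {\<rho>1 i0})" using sing i0(2,3) by blast
  then have sub: "sym_trop_singular ?A' (I - {i0}) (J - {\<rho>1 i0})"
    by (rule sym_trop_singular_cong[rotated]) (use i0(2,3) in \<open>auto simp: border_mat_def\<close>)
  show ?thesis by (rule sym_trop_singular_extend[OF fI i0(1) b1 min1 sub])
qed

definition schur_compl :: "nat \<Rightarrow> (nat \<Rightarrow> nat \<Rightarrow> hahn) \<Rightarrow> nat \<Rightarrow> nat \<Rightarrow> hahn" where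
  "schur_compl n L i j = (\<lambda>g. hmul (L n n) (L i j) g - hmul (L i n) (L n j) g)"

lemma habs_schur_compl:
  assumes "\<And>i j. i \<le> n \<Longrightarrow> j \<le> n \<Longrightarrow> is_hahn (L i j)" "i \<le> n" "j \<le> n"
  shows "habs (schur_compl n L i j) = habs (L n n) * habs (L i j) - habs (L i n) * habs (L n j)"
proof -
  have "hrep (habs (L n n) * habs (L i j) - habs (L i n) * habs (L n j)) = schur_compl n L i j"
    using assms by (simp add: minus_hs.rep_eq times_hs.rep_eq hrep_habs schur_compl_def)
  then show ?thesis by (metis hrep_inverse)
qed

lemma symmetric_lift_schur_compl:
  assumes lift: "symmetric_lift (n + 1) (border_mat n N A) L"
    and bound: "\<And>i j. i < n \<Longrightarrow> j < n \<Longrightarrow> A i j < N" and N: "0 < N"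
  shows "symmetric_lift n A (schur_compl n L)"
proof -
  have Lh: "is_hahn (L i j)" "L i j \<noteq> hzero" "hdeg (L i j) = border_mat n N A i j" if "i \<le> n" "j \<le> n" for i j
    using lift that unfolding symmetric_lift_def by auto
  have Ls: "L i j = L j i" if "i \<le> n" "j \<le> n" for i j
    using lift that unfolding symmetric_lift_def symmetric_mat_def by auto
  have entry: "is_hahn (schur_compl n L i j) \<and> schur_compl n L i j \<noteq> hzero \<and> hdeg (schur_compl n L i j) = A i j"
    if ij: "i < n" "j < n" for i j
  proof -
    have u: "hmul (L n n) (L i j) \<noteq> hzero" "hdeg (hmul (L n n) (L i j)) = A i j"
      using hmul_nonzero[OF Lh(1,1,2,2)] Lh(3) ij by (auto simp: border_mat_def)
    have v: "hdeg (hmul (L i n) (L n j)) = N + N"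
      using hmul_nonzero(2)[OF Lh(1,1,2,2)] Lh(3) ij by (auto simp: border_mat_def)
    have "hdeg (hmul (L n n) (L i j)) < hdeg (hmul (L i n) (L n j))"
      using u(2) v bound[OF ij] N by simp
    from hdeg_diff_lower[OF is_hahn_hmul[OF Lh(1,1)] is_hahn_hmul[OF Lh(1,1)] u(1) this] show ?thesis
      using u(2) is_hahn_diff[OF is_hahn_hmul[OF Lh(1,1)] is_hahn_hmul[OF Lh(1,1)]] ij
      by (simp add: schur_compl_def)
  qed
  have "schur_compl n L i j = schur_compl n L j i" if "i < n" "j < n" for i j
    using that Ls hmul_commute[of "L i n" "L n j"] by (simp add: schur_compl_def)
  then show ?thesis unfolding symmetric_lift_def symmetric_mat_def using entry by auto
qed

lemma rank_le_pred_schur_compl: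
  assumes hahn: "\<And>i j. i \<le> n \<Longrightarrow> j \<le> n \<Longrightarrow> is_hahn (L i j)" and corner: "L n n \<noteq> hzero"
    and rk: "rank_le_pred (n + 1) (r + 1) L"
  shows "rank_le_pred n r (schur_compl n L)"
  unfolding rank_le_pred_def
proof (intro allI impI)
  fix I J assume I: "I \<subseteq> {..<n}" and J: "J \<subseteq> {..<n}" and cI: "card I = r" and cJ: "card J = r"
  have fI: "finite I" and fJ: "finite J" using I J finite_subset by auto
  have nI: "sorted_nth I k < n" and nJ: "sorted_nth J k < n" if "k < r" for k
    using sorted_nth_in[OF fI, of k] sorted_nth_in[OF fJ, of k] that cI cJ I J by auto
  have "n \<notin> I" "n \<notin> J" using I J by auto
  then have cI': "card (insert n I) = r + 1" and cJ': "card (insert n J) = r + 1" using cI cJ fI fJ by auto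
  let ?c = "habs (L n n)"
  let ?B = "mat r r (\<lambda>(k, l). habs (L (sorted_nth I k) (sorted_nth J l)))"
  let ?x = "mat r 1 (\<lambda>(k, l). habs (L (sorted_nth I k) n))"
  let ?y = "mat 1 r (\<lambda>(k, l). habs (L n (sorted_nth J l)))"
  have I_less: "\<And>i. i \<in> I \<Longrightarrow> i < n" and J_less: "\<And>j. j \<in> J \<Longrightarrow> j < n" using I J by auto
  have "insert n I \<subseteq> {..<n + 1}" "insert n J \<subseteq> {..<n + 1}" using I J by auto
  then have "hminor L (insert n I) (insert n J) = hzero"
    using rk cI' cJ' unfolding rank_le_pred_def by blast
  moreover have "hminor L (insert n I) (insert n J) = hrep (det (four_block_mat ?B ?x ?y (?c \<cdot>\<^sub>m 1\<^sub>m 1)))"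
  proof -
    have "\<And>i j. i \<in> insert n I \<Longrightarrow> j \<in> insert n J \<Longrightarrow> is_hahn (L i j)"
      using hahn I_less J_less by (auto simp: less_imp_le)
    with hminor_eq_hrep_det[of "insert n I" "insert n J" L] fI fJ cI' cJ'
    have "hminor L (insert n I) (insert n J) = hrep (det (mat (r + 1) (r + 1)
        (\<lambda>(k, l). habs (L (sorted_nth (insert n I) k) (sorted_nth (insert n J) l)))))"
      by simp
    also have "mat (r + 1) (r + 1) (\<lambda>(k, l). habs (L (sorted_nth (insert n I) k) (sorted_nth (insert n J) l)))
        = four_block_mat ?B ?x ?y (?c \<cdot>\<^sub>m 1\<^sub>m 1)"
      by (rule eq_matI)
        (auto simp: sorted_nth_insert_greatest[OF fI I_less] sorted_nth_insert_greatest[OF fJ J_less] cI cJ)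
    finally show ?thesis .
  qed
  ultimately have "det (four_block_mat ?B ?x ?y (?c \<cdot>\<^sub>m 1\<^sub>m 1)) = 0"
    by (simp add: hrep_eq_hzero_iff)
  moreover have "det (four_block_mat ?B ?x ?y (?c \<cdot>\<^sub>m 1\<^sub>m 1)) * ?c ^ r = det (?c \<cdot>\<^sub>m ?B - ?x * ?y) * ?c"
    by (rule chio_condensation) auto
  moreover have "?c \<noteq> 0" using habs_nonzero hahn corner by simp
  ultimately have "det (?c \<cdot>\<^sub>m ?B - ?x * ?y) = 0" by simp
  moreover have "mat r r (\<lambda>(k, l). habs (schur_compl n L (sorted_nth I k) (sorted_nth J l))) = ?c \<cdot>\<^sub>m ?B - ?x * ?y"
    by (rule eq_matI) (auto simp: habs_schur_compl[OF hahn] nI nJ less_imp_le scalar_prod_def)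
  moreover have "\<And>i j. i \<in> I \<Longrightarrow> j \<in> J \<Longrightarrow> is_hahn (schur_compl n L i j)"
    unfolding schur_compl_def using I_less J_less by (intro is_hahn_diff is_hahn_hmul hahn) (auto simp: less_imp_le)
  note hminor_eq_hrep_det[of I J "schur_compl n L", OF fI fJ _ this]
  ultimately show "hminor (schur_compl n L) I J = hzero"
    using cI cJ by (simp add: zero_hs.rep_eq)
qed

lemma not_sym_minors_tropical_basis_border_mat:
  assumes A: "symmetric_mat n A"
    and sing: "\<And>I J. I \<subseteq> {..<n} \<Longrightarrow> J \<subseteq> {..<n} \<Longrightarrow> card I = r \<Longrightarrow> card J = r \<Longrightarrow> sym_trop_singular A I J"
    and no_lift: "\<nexists>L. symmetric_lift n A L \<and> rank_le_pred n r L"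
  shows "\<not> sym_minors_tropical_basis (n + 1) (r + 1)"
proof -
  define N where "N = 1 + (\<Sum>i<n. \<Sum>j<n. \<bar>A i j\<bar>)"
  have bound: "A i j < N" if "i < n" "j < n" for i j
  proof -
    have "\<bar>A i j\<bar> \<le> (\<Sum>j<n. \<bar>A i j\<bar>)" using that by (intro member_le_sum) auto
    also have "\<dots> \<le> (\<Sum>i<n. \<Sum>j<n. \<bar>A i j\<bar>)"
      using that by (intro member_le_sum[of i "{..<n}" "\<lambda>i. \<Sum>j<n. \<bar>A i j\<bar>"]) (auto intro: sum_nonneg)
    finally show ?thesis unfolding N_def by linarith
  qed
  have N: "0 < N" unfolding N_def by (smt (verit) sum_nonneg abs_ge_zero)
  have "\<nexists>L. symmetric_lift (n + 1) (border_mat n N A) L \<and> rank_le_pred (n + 1) (r + 1) L"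
  proof
    assume "\<exists>L. symmetric_lift (n + 1) (border_mat n N A) L \<and> rank_le_pred (n + 1) (r + 1) L"
    then obtain L where lift: "symmetric_lift (n + 1) (border_mat n N A) L" and rk: "rank_le_pred (n + 1) (r + 1) L"
      by blast
    have "\<And>i j. i \<le> n \<Longrightarrow> j \<le> n \<Longrightarrow> is_hahn (L i j)" "L n n \<noteq> hzero"
      using lift unfolding symmetric_lift_def by auto
    then have "rank_le_pred n r (schur_compl n L)" by (rule rank_le_pred_schur_compl[OF _ _ rk])
    with symmetric_lift_schur_compl[OF lift bound N] no_lift show False by blast
  qed
  moreover have "\<forall>I J. I \<subseteq> {..<n + 1} \<longrightarrow> J \<subseteq> {..<n + 1} \<longrightarrow> card I = r + 1 \<longrightarrow> card J = r + 1
      \<longrightarrow> sym_trop_singular (border_mat n N A) I J"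
    using border_mat_sym_trop_singular[OF sing bound N] by blast
  ultimately show ?thesis
    using symmetric_mat_border_mat[OF A] unfolding sym_minors_tropical_basis_def by blast
qed

theorem corollary4:
  fixes n r :: nat
  assumes "\<not> sym_minors_tropical_basis n r"
  shows "\<not> sym_minors_tropical_basis (n + 1) (r + 1)"
proof -
  obtain A where A: "symmetric_mat n A"
    and not_iff: "\<not> ((\<forall>I J. I \<subseteq> {..<n} \<longrightarrow> J \<subseteq> {..<n} \<longrightarrow> card I = r \<longrightarrow> card J = r
          \<longrightarrow> sym_trop_singular A I J) \<longleftrightarrow> (\<exists>L. symmetric_lift n A L \<and> rank_le_pred n r L))"
    using assms unfolding sym_minors_tropical_basis_def by blast
  then show ?thesis
    using not_sym_minors_tropical_basis_border_mat[OF A] sym_trop_singular_if_lift_rank_le by blast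
qed

end
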